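(* Let $M$ be a positive integer and $L$ a positive divisor of $M$ with $L^*>2$, and let $\ell$ be the number of prime divisors of $L$. Then $I_1(L,M)=\varphi(L^* )\big(M^2/L^*-(-1)^\ell\epsilon\big)/8$, where $\epsilon=1$ if $M$ is odd, $\epsilon=2$ if $M\equiv2\bmod4$ and $L^*$ is even, and $\epsilon=0$ otherwise.
   Context: For a positive integer $n$, $n^*$ denotes the product of the distinct prime divisors of $n$, and $\varphi$ is Euler's totient function. For a positive integer $M$, a positive divisor $L$ of $M$ and an integer $k\ge0$, $I_k(L,M)=\sum_t t^k$, the sum over integers $t$ with $0<t<M/2$ and $\gcd(t,L)=1$. *)

theory Defs
  imports "HOL-Number_Theory.Number_Theory"
begin

definition rad :: "nat \<Rightarrow> nat" where
  "rad n = (\<Prod>p\<in>prime_factors n. p)"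

definition Isum :: "nat \<Rightarrow> nat \<Rightarrow> nat \<Rightarrow> nat" where
  "Isum k L M = (\<Sum>t\<in>{t. 0 < t \<and> 2 * t < M \<and> coprime t L}. t ^ k)"

end

theory Submission
  imports Defs
begin

text \<open>
  Sieve by the prime divisors of L one at a time: the multiples p t of a prime p among the
  survivors below M/2 correspond to the survivors t below M/(2p). Inclusion-exclusion over
  the sets S of prime divisors of L, with d = \<Prod>S, thus expresses I_1(L,M) through the plain
  sums H(M/d) of all t < M/(2d), and 8 H(n) is n^2 - 2n or n^2 - 1 according to the parity
  of n. The main terms M^2/d add up to M^2 \<phi>(L*)/L*. The defects depend only on the parity
  of M/d, which is odd for every S when M is odd and otherwise exactly when M \<equiv> 2 mod 4 and
  2 \<in> S; since L* > 2, their alternating sum collapses to \<epsilon> \<Prod>(1 - p) = (-1)^l \<epsilon> \<phi>(L*).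
\<close>

lemma sum_Pow_insert:
  assumes "finite A" "a \<notin> A"
  shows "(\<Sum>S\<in>Pow (insert a A). g S) = (\<Sum>S\<in>Pow A. g S) + (\<Sum>S\<in>Pow A. g (insert a S))"
proof -
  have "inj_on (insert a) (Pow A)" "Pow A \<inter> insert a ` Pow A = {}"
    using assms(2) by (auto simp: inj_on_def)
  with assms(1) show ?thesis
    unfolding Pow_insert by (simp add: sum.union_disjoint sum.reindex)
qed

lemma prod_one_minus_conv_sum:
  fixes f :: "'a \<Rightarrow> 'b :: comm_ring_1"
  assumes "finite A"
  shows "(\<Prod>x\<in>A. 1 - f x) = (\<Sum>S\<in>Pow A. (-1) ^ card S * (\<Prod>x\<in>S. f x))"
  using prod_diff_conv_sum[OF assms, of "\<lambda>_. 1" f] by simp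

lemma sum_Pow_alternating_const:
  fixes c :: "'b :: comm_ring_1"
  assumes "finite A" "A \<noteq> {}"
  shows "(\<Sum>S\<in>Pow A. (-1) ^ card S * c) = 0"
proof -
  have "(\<Sum>S\<in>Pow A. (-1) ^ card S * c) = (\<Prod>x\<in>A. 1 - 1) * c"
    using prod_one_minus_conv_sum[OF assms(1), of "\<lambda>_. 1 :: 'b"] by (simp add: sum_distrib_right)
  with assms show ?thesis by (simp add: power_0_left)
qed

lemma even_prod_primes_iff:
  assumes "finite S" "\<forall>p\<in>S. prime (p :: nat)"
  shows "even (\<Prod>S) \<longleftrightarrow> 2 \<in> S"
proof -
  have "even (\<Prod>S) \<longleftrightarrow> (\<exists>p\<in>S. 2 dvd p)"
    using prime_dvd_prod_iff[of S 2 id] assms(1) by simp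
  also have "\<dots> \<longleftrightarrow> 2 \<in> S"
    using assms(2) by (metis dvd_refl primes_dvd_imp_eq two_is_prime_nat)
  finally show ?thesis .
qed

lemma odd_div_prod_primes_iff:
  assumes "finite S" "\<forall>p\<in>S. prime (p :: nat)" "\<Prod>S dvd n" "even n"
  shows "odd (n div \<Prod>S) \<longleftrightarrow> n mod 4 = 2 \<and> 2 \<in> S"
proof -
  obtain q where q: "n = \<Prod>S * q" using assms(3) ..
  have "\<Prod>S \<noteq> 0" using assms(1,2) by auto
  then have nq: "n div \<Prod>S = q" using q by simp
  show ?thesis
  proof (cases "2 \<in> S")
    case False
    then have "odd (\<Prod>S)" using even_prod_primes_iff[OF assms(1,2)] by blast
    with q assms(4) nq False show ?thesis by auto
  next
    case True
    have "\<forall>p\<in>S - {2}. prime p" using assms(2) by blast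
    then have "odd (\<Prod>(S - {2}))" using even_prod_primes_iff[of "S - {2}"] assms(1) by blast
    moreover have "n = 2 * (\<Prod>(S - {2}) * q)"
      using q True assms(1) by (simp add: prod.remove mult.assoc)
    moreover have "n mod 4 = 2 \<longleftrightarrow> odd m" if "n = 2 * m" for m
      using that by presburger
    ultimately have "odd q \<longleftrightarrow> n mod 4 = 2" by simp
    with nq True show ?thesis by simp
  qed
qed

lemma rad_dvd: "rad n dvd n"
proof (cases "n = 0")
  case False
  have "rad n dvd (\<Prod>p\<in>prime_factors n. p ^ multiplicity p n)"
    unfolding rad_def
    by (intro prod_dvd_prod dvd_power) (auto simp: prime_factors_multiplicity)
  with False show ?thesis by (simp add: prod_prime_factors)
qed simp

lemma coprime_iff_no_prime_factor_dvd:
  assumes "(n :: nat) \<noteq> 0"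
  shows "coprime t n \<longleftrightarrow> (\<forall>p\<in>prime_factors n. \<not> p dvd t)"
proof
  assume coprime: "coprime t n"
  show "\<forall>p\<in>prime_factors n. \<not> p dvd t"
  proof (intro ballI notI)
    fix p assume p: "p \<in> prime_factors n" "p dvd t"
    have "is_unit p" using coprime_common_divisor[OF coprime p(2)] p(1) by auto
    then show False using p(1) not_prime_unit by auto
  qed
next
  assume no_factor: "\<forall>p\<in>prime_factors n. \<not> p dvd t"
  show "coprime t n"
  proof (rule ccontr)
    assume "\<not> coprime t n"
    then obtain p where p: "prime p" "p dvd gcd t n"
      using prime_factor_nat unfolding coprime_iff_gcd_eq_1 by blast
    then have "p dvd t" "p \<in> prime_factors n"
      using assms by (auto intro: prime_factorsI dvd_trans)
    with no_factor show False by blast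
  qed
qed

lemma totient_prod_primes:
  assumes "finite P" "\<forall>p\<in>P. prime p"
  shows "real (totient (\<Prod>P)) = (\<Prod>p\<in>P. real p - 1)"
proof -
  have "totient (\<Prod>P) = (\<Prod>p\<in>P. totient p)"
    using assms(2) by (intro totient_prod_coprime) (auto simp: pairwise_def primes_coprime)
  also have "\<dots> = (\<Prod>p\<in>P. p - 1)"
    using assms(2) by (simp add: totient_prime)
  finally show ?thesis
    using assms(2) by (simp add: of_nat_diff prime_ge_Suc_0_nat)
qed

definition half_sum :: "nat \<Rightarrow> nat" where
  "half_sum n = (\<Sum>t | 0 < t \<and> 2 * t < n. t)"

lemma half_sum_closed_form:
  "8 * real (half_sum n) = (if even n then real n ^ 2 - 2 * real n else real n ^ 2 - 1)"
proof -
  define k where "k = (n - 1) div 2"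
  have "half_sum n = (\<Sum>t = Suc 0..k. t)"
    unfolding half_sum_def k_def by (intro sum.cong) auto
  then have gauss: "2 * real (half_sum n) = real k * (real k + 1)"
    using double_gauss_sum_from_Suc_0[of k, where ?'a = real] by simp
  have "n = 0 \<or> n = 2 * k + 2 \<or> n = 2 * k + 1"
    unfolding k_def by presburger
  then consider "n = 0" | "n = 2 * k + 2" | "n = 2 * k + 1"
    by blast
  then show ?thesis
    by cases (use gauss in \<open>auto simp: half_sum_def algebra_simps power2_eq_square\<close>)
qed

definition half_sum_defect :: "nat \<Rightarrow> nat \<Rightarrow> real" where
  "half_sum_defect n d = (if odd (n div d) then real d else 2 * real n)"

lemma half_sum_div_scaled:
  assumes "d dvd n" "0 < n"
  shows "real d * (8 * real (half_sum (n div d))) = real n ^ 2 / real d - half_sum_defect n d"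
proof -
  obtain q where q: "n = d * q" using assms(1) ..
  with assms(2) have "0 < d" by (cases "d = 0") auto
  with q show ?thesis
    using half_sum_closed_form[of q]
    by (simp add: half_sum_defect_def field_simps power2_eq_square)
qed

definition sieved_half_sum :: "nat set \<Rightarrow> nat \<Rightarrow> nat" where
  "sieved_half_sum P n = (\<Sum>t | 0 < t \<and> 2 * t < n \<and> (\<forall>p\<in>P. \<not> p dvd t). t)"

lemma sieved_half_sum_insert:
  assumes "prime p" "p \<notin> P" "\<forall>q\<in>P. prime q" "p dvd n"
  shows "sieved_half_sum P n = sieved_half_sum (insert p P) n + p * sieved_half_sum P (n div p)"
proof -
  define A where "A = {t. 0 < t \<and> 2 * t < n \<and> (\<forall>q\<in>P. \<not> q dvd t)}"
  define A' where "A' = {t. 0 < t \<and> 2 * t < n \<and> (\<forall>q\<in>insert p P. \<not> q dvd t)}"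
  define B where "B = {s. 0 < s \<and> 2 * s < n div p \<and> (\<forall>q\<in>P. \<not> q dvd s)}"
  have p0: "0 < p" using assms(1) prime_gt_0_nat by blast
  obtain m where m: "n = p * m" using assms(4) ..
  have coprime_p: "\<not> q dvd p" if "q \<in> P" for q
    using that assms(1-3) primes_dvd_imp_eq by blast
  have "A = A' \<union> (\<lambda>s. p * s) ` B"
  proof (intro equalityI subsetI)
    fix t assume t: "t \<in> A"
    show "t \<in> A' \<union> (\<lambda>s. p * s) ` B"
    proof (cases "p dvd t")
      case True
      then obtain s where "t = p * s" ..
      with t m p0 have "s \<in> B" unfolding A_def B_def by auto
      with \<open>t = p * s\<close> show ?thesis by blast
    qed (use t in \<open>auto simp: A_def A'_def\<close>)
  next
    fix t assume "t \<in> A' \<union> (\<lambda>s. p * s) ` B"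
    then show "t \<in> A"
    proof
      assume "t \<in> (\<lambda>s. p * s) ` B"
      then obtain s where s: "s \<in> B" "t = p * s" by blast
      have "\<not> q dvd p * s" if "q \<in> P" for q
        using s(1) that coprime_p assms(3) prime_dvd_mult_iff unfolding B_def by blast
      with s m p0 show ?thesis unfolding A_def B_def by auto
    qed (auto simp: A_def A'_def)
  qed
  moreover have "A' \<inter> (\<lambda>s. p * s) ` B = {}" unfolding A'_def by auto
  moreover have "finite A" unfolding A_def by (rule finite_subset[of _ "{..<n}"]) auto
  moreover have "inj_on (\<lambda>s. p * s) B" using p0 by (auto intro: inj_onI)
  ultimately have "sum id A = sum id A' + p * sum id B"
    by (simp add: sum.union_disjoint sum.reindex sum_distrib_left)
  then show ?thesis unfolding sieved_half_sum_def A_def A'_def B_def by simp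
qed

lemma sieved_half_sum_inclusion_exclusion:
  assumes "finite P" "\<forall>p\<in>P. prime p" "\<Prod>P dvd n"
  shows "real (sieved_half_sum P n)
           = (\<Sum>S\<in>Pow P. (-1) ^ card S * real (\<Prod>S) * real (half_sum (n div \<Prod>S)))"
  using assms
proof (induction P arbitrary: n rule: finite_induct)
  case empty
  then show ?case by (simp add: sieved_half_sum_def half_sum_def)
next
  case (insert p P)
  let ?term = "\<lambda>n S. (-1) ^ card S * real (\<Prod>S) * real (half_sum (n div \<Prod>S))"
  from insert.prems have "prime p" "p dvd n" "\<Prod>P dvd n div p" "\<Prod>P dvd n"
    using insert.hyps by (auto simp: dvd_div_iff_mult mult.commute intro: dvd_mult_left)
  then have "real (sieved_half_sum (insert p P) n)
               = real (sieved_half_sum P n) - real p * real (sieved_half_sum P (n div p))"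
    using sieved_half_sum_insert[of p P n] insert.hyps insert.prems(1) by simp
  also have "\<dots> = (\<Sum>S\<in>Pow P. ?term n S) - real p * (\<Sum>S\<in>Pow P. ?term (n div p) S)"
    using insert.IH insert.prems \<open>\<Prod>P dvd n div p\<close> \<open>\<Prod>P dvd n\<close> by simp
  also have "\<dots> = (\<Sum>S\<in>Pow P. ?term n S) + (\<Sum>S\<in>Pow P. ?term n (insert p S))"
    unfolding sum_distrib_left sum_subtractf[symmetric] diff_conv_add_uminus sum_negf[symmetric]
  proof (intro arg_cong2[where f = "(+)"] sum.cong refl)
    fix S assume "S \<in> Pow P"
    with insert.hyps have "finite S" "p \<notin> S" by (auto dest: finite_subset)
    then show "- (real p * ?term (n div p) S) = ?term n (insert p S)"
      by (simp add: div_mult2_eq)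
  qed
  also have "\<dots> = (\<Sum>S\<in>Pow (insert p P). ?term n S)"
    by (simp only: sum_Pow_insert[OF insert.hyps])
  finally show ?case .
qed

lemma sieved_half_sum_expansion:
  assumes "finite P" "\<forall>p\<in>P. prime p" "\<Prod>P dvd n" "0 < n"
  shows "8 * real (sieved_half_sum P n)
           = real n ^ 2 * (\<Prod>p\<in>P. 1 - 1 / real p)
             - (\<Sum>S\<in>Pow P. (-1) ^ card S * half_sum_defect n (\<Prod>S))"
proof -
  have dvd: "\<Prod>S dvd n" if "S \<in> Pow P" for S
    using that assms(1,3) by (auto intro: dvd_trans[OF prod_dvd_prod_subset])
  have "8 * real (sieved_half_sum P n)
          = (\<Sum>S\<in>Pow P. (-1) ^ card S * (real (\<Prod>S) * (8 * real (half_sum (n div \<Prod>S)))))"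
    using sieved_half_sum_inclusion_exclusion[OF assms(1-3)] by (simp add: sum_distrib_left mult_ac)
  also have "\<dots> = (\<Sum>S\<in>Pow P. real n ^ 2 * ((-1) ^ card S * (\<Prod>p\<in>S. 1 / real p))
                      - (-1) ^ card S * half_sum_defect n (\<Prod>S))"
    using half_sum_div_scaled[OF dvd assms(4)]
    by (intro sum.cong refl) (simp add: prod_dividef right_diff_distrib)
  also have "\<dots> = real n ^ 2 * (\<Prod>p\<in>P. 1 - 1 / real p)
                    - (\<Sum>S\<in>Pow P. (-1) ^ card S * half_sum_defect n (\<Prod>S))"
    by (simp add: sum_subtractf sum_distrib_left prod_one_minus_conv_sum[OF assms(1)])
  finally show ?thesis .
qed

lemma half_sum_defect_sum_odd:
  assumes "finite P" "\<forall>p\<in>P. prime p" "\<Prod>P dvd n" "odd n"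
  shows "(\<Sum>S\<in>Pow P. (-1) ^ card S * half_sum_defect n (\<Prod>S)) = (\<Prod>p\<in>P. 1 - real p)"
proof -
  have "half_sum_defect n (\<Prod>S) = (\<Prod>p\<in>S. real p)" if "S \<in> Pow P" for S
  proof -
    have "\<Prod>S dvd n"
      using that assms(1,3) by (auto intro: dvd_trans[OF prod_dvd_prod_subset])
    with assms(4) have "odd (n div \<Prod>S)" by (metis dvd_mult_div_cancel even_mult_iff)
    then show ?thesis by (simp add: half_sum_defect_def)
  qed
  then show ?thesis
    by (simp add: prod_one_minus_conv_sum[OF assms(1)])
qed

lemma half_sum_defect_sum_even:
  assumes "finite P" "\<forall>p\<in>P. prime p" "\<Prod>P dvd n" "even n" "\<Prod>P > 2"
  shows "(\<Sum>S\<in>Pow P. (-1) ^ card S * half_sum_defect n (\<Prod>S))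
           = (if n mod 4 = 2 \<and> 2 \<in> P then 2 else 0) * (\<Prod>p\<in>P. 1 - real p)"
proof -
  have defect: "half_sum_defect n (\<Prod>S)
                  = (if n mod 4 = 2 \<and> 2 \<in> S then real (\<Prod>S) else 2 * real n)"
    if "S \<subseteq> P" for S
  proof -
    have "finite S" "\<forall>p\<in>S. prime p" "\<Prod>S dvd n"
      using that assms(1-3) by (auto dest: finite_subset intro: dvd_trans[OF prod_dvd_prod_subset])
    then show ?thesis
      using odd_div_prod_primes_iff[OF _ _ _ assms(4)] by (simp add: half_sum_defect_def)
  qed
  have vanish: "(\<Sum>S\<in>Pow Q. (-1) ^ card S * half_sum_defect n (\<Prod>S)) = 0"
    if "Q \<subseteq> P" "Q \<noteq> {}" "\<not> (n mod 4 = 2 \<and> 2 \<in> Q)" for Q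
  proof -
    have "(\<Sum>S\<in>Pow Q. (-1) ^ card S * half_sum_defect n (\<Prod>S))
            = (\<Sum>S\<in>Pow Q. (-1) ^ card S * (2 * real n))"
      using that defect by (intro sum.cong refl) auto
    also have "\<dots> = 0"
      using that assms(1) by (intro sum_Pow_alternating_const) (auto dest: finite_subset)
    finally show ?thesis .
  qed
  show ?thesis
  proof (cases "n mod 4 = 2 \<and> 2 \<in> P")
    case False
    moreover have "P \<noteq> {}" using assms(5) by auto
    ultimately show ?thesis using vanish[of P] by auto
  next
    case True
    define P' where "P' = P - {2}"
    have P: "P = insert 2 P'" "2 \<notin> P'" "finite P'"
      using True assms(1) by (auto simp: P'_def)
    have "P' \<noteq> {}" using assms(5) P(1) by auto
    have "(\<Sum>S\<in>Pow P. (-1) ^ card S * half_sum_defect n (\<Prod>S))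
            = (\<Sum>S\<in>Pow P'. (-1) ^ card S * half_sum_defect n (\<Prod>S))
              + (\<Sum>S\<in>Pow P'. (-1) ^ card (insert 2 S) * half_sum_defect n (\<Prod>(insert 2 S)))"
      unfolding P(1) by (rule sum_Pow_insert[OF P(3,2)])
    also have "(\<Sum>S\<in>Pow P'. (-1) ^ card S * half_sum_defect n (\<Prod>S)) = 0"
      using vanish[of P'] \<open>P' \<noteq> {}\<close> P by auto
    also have "(\<Sum>S\<in>Pow P'. (-1) ^ card (insert 2 S) * half_sum_defect n (\<Prod>(insert 2 S)))
                 = -2 * (\<Sum>S\<in>Pow P'. (-1) ^ card S * (\<Prod>p\<in>S. real p))"
      unfolding sum_distrib_left
    proof (intro sum.cong refl)
      fix S assume "S \<in> Pow P'"
      with P have "insert 2 S \<subseteq> P" "finite S" "2 \<notin> S" by (auto dest: finite_subset)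
      with True defect[of "insert 2 S"] show
        "(-1) ^ card (insert 2 S) * half_sum_defect n (\<Prod>(insert 2 S))
           = -2 * ((-1) ^ card S * (\<Prod>p\<in>S. real p))"
        by simp
    qed
    also have "\<dots> = 2 * (\<Prod>p\<in>P. 1 - real p)"
      using P by (simp add: prod_one_minus_conv_sum[OF P(3)])
    finally show ?thesis using True by simp
  qed
qed

theorem propositionA1:
  fixes M L :: nat and \<epsilon> :: real
  assumes "0 < M" and "L dvd M" and "rad L > 2"
    and "\<epsilon> = (if odd M then 1
              else if M mod 4 = 2 \<and> even (rad L) then 2
              else 0)"
  shows "real (Isum 1 L M) =
           real (totient (rad L)) *
           (real M ^ 2 / real (rad L) - (-1) ^ card (prime_factors L) * \<epsilon>) / 8"
proof -
  define P where "P = prime_factors L"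
  have P: "finite P" "\<forall>p\<in>P. prime p" "\<Prod>P dvd M" and rad: "rad L = \<Prod>P"
    using rad_dvd[of L] assms(2) by (auto simp: P_def rad_def intro: dvd_trans)
  have "L \<noteq> 0" using assms(1,2) by auto
  then have "Isum 1 L M = sieved_half_sum P M"
    by (simp add: Isum_def sieved_half_sum_def P_def coprime_iff_no_prime_factor_dvd)
  then have "8 * real (Isum 1 L M)
               = real M ^ 2 * (\<Prod>p\<in>P. 1 - 1 / real p)
                 - (\<Sum>S\<in>Pow P. (-1) ^ card S * half_sum_defect M (\<Prod>S))"
    using sieved_half_sum_expansion[OF P assms(1)] by simp
  also have "(\<Prod>p\<in>P. 1 - 1 / real p) = real (totient (rad L)) / real (rad L)"
    using P(2) by (simp add: rad totient_prod_primes[OF P(1,2)] prod_dividef[symmetric]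
                             field_simps prime_gt_0_nat cong: prod.cong)
  also have "(\<Sum>S\<in>Pow P. (-1) ^ card S * half_sum_defect M (\<Prod>S))
               = (-1) ^ card P * real (totient (rad L)) * \<epsilon>"
  proof -
    have "(\<Prod>p\<in>P. 1 - real p) = (-1) ^ card P * real (totient (rad L))"
      using prod_uminus[of "\<lambda>p. real p - 1" P] by (simp add: rad totient_prod_primes[OF P(1,2)])
    moreover have "even (rad L) \<longleftrightarrow> 2 \<in> P"
      using even_prod_primes_iff[OF P(1,2)] rad by simp
    ultimately show ?thesis
      using half_sum_defect_sum_odd[OF P] half_sum_defect_sum_even[OF P] assms(3,4) rad
      by (cases "odd M") auto
  qed
  finally show ?thesis
    using assms(3) unfolding P_def by (simp add: field_simps)
qed

end
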